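(* (Symmetric sum formula) Let $\mathbf{k}=(k_1,\ldots,k_n)$ be a sequence of integers with all $k_i\ge2$. Then $$\sum_{\sigma\in S_n}\zeta^t(k_{\sigma(1)},\ldots,k_{\sigma(n)})=\sum_{\Pi=\{P_1,\ldots,P_i\}\in\mathcal{P}_n}c_\Pi(t)\prod_{j=1}^i\zeta\Big(\sum_{l\in P_j}k_l\Big).$$
   Context: For positive integers $k_1\ge2,k_2,\ldots,k_n$, $\zeta(k_1,\ldots,k_n)=\sum_{m_1>m_2>\cdots>m_n>0}m_1^{-k_1}\cdots m_n^{-k_n}$, and the interpolated multiple zeta value is the polynomial $\zeta^t(k_1,\ldots,k_n)=\sum_{\mathbf{p}}t^{n-\mathrm{dep}(\mathbf{p})}\zeta(\mathbf{p})\in\mathbb{R}[t]$, where $\mathbf{p}$ runs over the $2^{n-1}$ sequences $(k_1\,\square\,k_2\,\square\cdots\square\,k_n)$ obtained by replacing each $\square$ by either a comma or a plus sign, and $\mathrm{dep}(\mathbf{p})$ is the length of $\mathbf p$. $S_n$ is the symmetric group, $\mathcal{P}_n$ the set of set partitions of $\{1,\ldots,n\}$, $c_m(t)=(m-1)![t^m-(t-1)^m]$ for $m\ge1$, and $c_\Pi(t)=\prod_{j}c_{\#P_j}(t)$ for $\Pi=\{P_1,\ldots,P_i\}$. *)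

theory Defs
  imports "HOL-Analysis.Analysis" "HOL-Combinatorics.Permutations" "HOL-Library.Disjoint_Sets"
begin

definition mzv :: "nat list \<Rightarrow> real" where
  "mzv ks = infsum (\<lambda>ms. \<Prod>i<length ks. 1 / real (ms ! i) ^ (ks ! i))
     {ms. length ms = length ks \<and> sorted_wrt (>) ms \<and> (\<forall>m\<in>set ms. m > 0)}"

fun add_hd :: "nat \<Rightarrow> nat list \<Rightarrow> nat list" where
  "add_hd k [] = [k]"
| "add_hd k (x # xs) = (k + x) # xs"

text \<open>All 2^(n-1) sequences (k_1 [] k_2 [] ... [] k_n), each box a comma or a plus.\<close>
fun merges :: "nat list \<Rightarrow> nat list list" where
  "merges [] = [[]]"
| "merges [k] = [[k]]"
| "merges (k # l # rest) =
     map ((#) k) (merges (l # rest)) @ map (add_hd k) (merges (l # rest))"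

definition zeta_t :: "real \<Rightarrow> nat list \<Rightarrow> real" where
  "zeta_t t ks = (\<Sum>p \<leftarrow> merges ks. t ^ (length ks - length p) * mzv p)"

definition c_coef :: "nat \<Rightarrow> real \<Rightarrow> real" where
  "c_coef m t = fact (m - 1) * (t ^ m - (t - 1) ^ m)"

end

theory Submission
  imports Defs "HOL-Combinatorics.Multiset_Permutations"
begin

(* Truncate all multiple zeta values to indices below h. Through the recursion that generates
   the sequences (k_1 [] ... [] k_n), the truncated zeta^t(k) becomes a sum over weakly decreasing
   index lists m, each weighted by t to the number of equalities m_i = m_(i+1). Summing over all
   sigma in S_n turns this into a sum over arbitrary index lists f in {1,...,h-1}^n, weighted by
   t^(n - #set f) times the order of the stabiliser of f, the product of the factorials of the
   multiplicities. On the other side, the product of single zeta values over the blocks of a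
   partition expands into the sum over the index lists that are constant on its blocks, so the
   coefficient of f is the sum of c_Pi(t) over the partitions refining the fibres of f. This sum
   factors over the fibres, and over all partitions of an m-element set it equals m! t^(m-1), by
   recursion on the block of one element. The coefficients agree, and since all k_i >= 2 the
   truncations converge as h tends to infinity. *)

section \<open>Truncated multiple zeta values\<close>

definition mzv_summand :: "nat list \<Rightarrow> nat list \<Rightarrow> real" where
  "mzv_summand ks ms = (\<Prod>i<length ks. 1 / real (ms ! i) ^ (ks ! i))"

definition index_lists :: "nat \<Rightarrow> nat \<Rightarrow> nat list set" where
  "index_lists h n = {ms. length ms = n \<and> (\<forall>m\<in>set ms. 0 < m \<and> m < h)}"

definition strict_chains :: "nat \<Rightarrow> nat \<Rightarrow> nat list set" where
  "strict_chains h n = {ms \<in> index_lists h n. sorted_wrt (>) ms}"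

definition weak_chains :: "nat \<Rightarrow> nat \<Rightarrow> nat list set" where
  "weak_chains h n = {ms \<in> index_lists h n. sorted_wrt (\<ge>) ms}"

definition mzv_trunc :: "nat \<Rightarrow> nat list \<Rightarrow> real" where
  "mzv_trunc h ks = (\<Sum>ms\<in>strict_chains h (length ks). mzv_summand ks ms)"

text \<open>For a weakly decreasing list \<open>ms\<close>, \<open>length ms - card (set ms)\<close> is the number of
  equalities \<open>m\<^sub>i = m\<^sub>i\<^sub>+\<^sub>1\<close>, i.e. the number of plus signs merging the corresponding arguments.\<close>
definition zeta_t_summand :: "real \<Rightarrow> nat list \<Rightarrow> nat list \<Rightarrow> real" where
  "zeta_t_summand t ks ms = t ^ (length ks - card (set ms)) * mzv_summand ks ms"

definition zeta_t_trunc :: "real \<Rightarrow> nat \<Rightarrow> nat list \<Rightarrow> real" where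
  "zeta_t_trunc t h ks = (\<Sum>ms\<in>weak_chains h (length ks). zeta_t_summand t ks ms)"

lemma finite_index_lists: "finite (index_lists h n)"
proof -
  have "index_lists h n \<subseteq> {ms. set ms \<subseteq> {0..<h} \<and> length ms = n}"
    by (auto simp: index_lists_def)
  thus ?thesis by (rule finite_subset) (rule finite_lists_length_eq, simp)
qed

lemma finite_strict_chains: "finite (strict_chains h n)"
  by (simp add: strict_chains_def finite_index_lists)

lemma finite_weak_chains: "finite (weak_chains h n)"
  by (simp add: weak_chains_def finite_index_lists)

lemma mzv_summand_nonneg: "mzv_summand ks ms \<ge> 0"
  unfolding mzv_summand_def by (intro prod_nonneg) auto

lemma mzv_summand_Cons: "mzv_summand (k # ks) (m # ms) = 1 / real m ^ k * mzv_summand ks ms"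
  unfolding mzv_summand_def length_Cons prod.lessThan_Suc_shift by simp

lemma strict_chains_0: "strict_chains h 0 = {[]}"
  by (auto simp: strict_chains_def index_lists_def)

lemma weak_chains_0: "weak_chains h 0 = {[]}"
  by (auto simp: weak_chains_def index_lists_def)

lemma strict_chains_Suc:
  "strict_chains h (Suc n) = (\<lambda>(m, ms). m # ms) ` (SIGMA m:{0<..<h}. strict_chains m n)"
proof (intro equalityI subsetI)
  fix xs assume xs: "xs \<in> strict_chains h (Suc n)"
  then obtain m ms where "xs = m # ms"
    by (cases xs) (auto simp: strict_chains_def index_lists_def)
  with xs show "xs \<in> (\<lambda>(m, ms). m # ms) ` (SIGMA m:{0<..<h}. strict_chains m n)"
    by (auto simp: strict_chains_def index_lists_def intro!: image_eqI[of _ _ "(m, ms)"])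
next
  fix xs assume "xs \<in> (\<lambda>(m, ms). m # ms) ` (SIGMA m:{0<..<h}. strict_chains m n)"
  thus "xs \<in> strict_chains h (Suc n)"
    by (auto simp: strict_chains_def index_lists_def) (meson less_trans)
qed

lemma weak_chains_Suc_Suc:
  "weak_chains h (Suc (Suc n)) =
     (\<lambda>(m, ms). m # ms) ` (SIGMA m:{0<..<h}. weak_chains m (Suc n))
     \<union> (\<lambda>ms. hd ms # ms) ` weak_chains h (Suc n)"
proof (intro equalityI subsetI)
  fix xs assume xs: "xs \<in> weak_chains h (Suc (Suc n))"
  then obtain m m' ms where xs_eq: "xs = m # m' # ms"
    by (cases xs; cases "tl xs") (auto simp: weak_chains_def index_lists_def)
  show "xs \<in> (\<lambda>(m, ms). m # ms) ` (SIGMA m:{0<..<h}. weak_chains m (Suc n))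
              \<union> (\<lambda>ms. hd ms # ms) ` weak_chains h (Suc n)"
  proof (cases "m = m'")
    case True
    thus ?thesis using xs unfolding xs_eq
      by (auto simp: weak_chains_def index_lists_def intro!: image_eqI[of _ _ "m' # ms"])
  next
    case False
    hence "m > m'" using xs unfolding xs_eq by (auto simp: weak_chains_def)
    thus ?thesis using xs unfolding xs_eq
      by (force simp: weak_chains_def index_lists_def intro!: image_eqI[of _ _ "(m, m' # ms)"])
  qed
next
  fix xs assume "xs \<in> (\<lambda>(m, ms). m # ms) ` (SIGMA m:{0<..<h}. weak_chains m (Suc n))
                        \<union> (\<lambda>ms. hd ms # ms) ` weak_chains h (Suc n)"
  then consider (descent) m ms where "m \<in> {0<..<h}" "ms \<in> weak_chains m (Suc n)" "xs = m # ms"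
    | (repeat) ms where "ms \<in> weak_chains h (Suc n)" "xs = hd ms # ms"
    by auto
  thus "xs \<in> weak_chains h (Suc (Suc n))"
  proof cases
    case descent
    thus ?thesis
      by (auto simp: weak_chains_def index_lists_def; meson less_trans less_imp_le)
  next
    case repeat
    then obtain y ys where "ms = y # ys" by (cases ms) (auto simp: weak_chains_def index_lists_def)
    thus ?thesis using repeat by (auto simp: weak_chains_def index_lists_def)
  qed
qed

lemma mzv_trunc_Nil: "mzv_trunc h [] = 1"
  by (simp add: mzv_trunc_def strict_chains_0 mzv_summand_def)

lemma mzv_trunc_Cons: "mzv_trunc h (k # ks) = (\<Sum>m\<in>{0<..<h}. 1 / real m ^ k * mzv_trunc m ks)"
proof -
  let ?S = "SIGMA m:{0<..<h}. strict_chains m (length ks)"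
  have inj: "inj_on (\<lambda>(m, ms). m # ms) ?S" by (auto simp: inj_on_def)
  have "mzv_trunc h (k # ks) = (\<Sum>(m, ms)\<in>?S. mzv_summand (k # ks) (m # ms))"
    unfolding mzv_trunc_def length_Cons strict_chains_Suc sum.reindex[OF inj]
    by (simp add: case_prod_unfold)
  also have "\<dots> = (\<Sum>m\<in>{0<..<h}. \<Sum>ms\<in>strict_chains m (length ks). 1 / real m ^ k * mzv_summand ks ms)"
    by (subst sum.Sigma) (auto simp: finite_strict_chains mzv_summand_Cons)
  also have "\<dots> = (\<Sum>m\<in>{0<..<h}. 1 / real m ^ k * mzv_trunc m ks)"
    by (simp add: mzv_trunc_def sum_distrib_left)
  finally show ?thesis .
qed

lemma mzv_trunc_singleton: "mzv_trunc h [k] = (\<Sum>m\<in>{0<..<h}. 1 / real m ^ k)"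
  by (simp add: mzv_trunc_Cons mzv_trunc_Nil)

lemma zeta_t_summand_Cons_descent:
  assumes "m \<notin> set ms" "length ms = length ks"
  shows "zeta_t_summand t (k # ks) (m # ms) = 1 / real m ^ k * zeta_t_summand t ks ms"
  using assms by (simp add: zeta_t_summand_def mzv_summand_Cons)

lemma zeta_t_summand_Cons_repeat:
  assumes "length ms = Suc (length ks)"
  shows "zeta_t_summand t (k # l # ks) (hd ms # ms) = t * zeta_t_summand t ((k + l) # ks) ms"
proof -
  obtain y ys where ms: "ms = y # ys" using assms by (cases ms) auto
  have "card (set ms) \<le> Suc (length ks)" using card_length[of ms] assms by simp
  hence "Suc (Suc (length ks)) - card (set ms) = Suc (Suc (length ks) - card (set ms))" by simp
  thus ?thesis using assms by (simp add: ms zeta_t_summand_def mzv_summand_Cons power_add)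
qed

lemma zeta_t_trunc_Cons_Cons:
  "zeta_t_trunc t h (k # l # ks) =
     (\<Sum>m\<in>{0<..<h}. 1 / real m ^ k * zeta_t_trunc t m (l # ks)) + t * zeta_t_trunc t h ((k + l) # ks)"
proof -
  let ?n = "Suc (length ks)"
  let ?S = "SIGMA m:{0<..<h}. weak_chains m ?n"
  let ?descent = "(\<lambda>(m, ms). m # ms) ` ?S"
  let ?repeat = "(\<lambda>ms. hd ms # ms) ` weak_chains h ?n"
  let ?f = "zeta_t_summand t (k # l # ks)"
  have inj_descent: "inj_on (\<lambda>(m, ms). m # ms) ?S" by (auto simp: inj_on_def)
  have inj_repeat: "inj_on (\<lambda>ms. hd ms # ms) (weak_chains h ?n)" by (auto simp: inj_on_def)
  have disj: "?descent \<inter> ?repeat = {}"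
    by (auto simp: weak_chains_def index_lists_def)
      (metis list.sel(1) list.set_intros(1) list.size(3) nat.distinct(1) nat_less_le neq_Nil_conv)
  have "zeta_t_trunc t h (k # l # ks) = sum ?f ?descent + sum ?f ?repeat"
    unfolding zeta_t_trunc_def length_Cons weak_chains_Suc_Suc
    by (rule sum.union_disjoint[OF _ _ disj]) (auto intro!: finite_imageI finite_SigmaI finite_weak_chains)
  also have "sum ?f ?descent = (\<Sum>(m, ms)\<in>?S. 1 / real m ^ k * zeta_t_summand t (l # ks) ms)"
    unfolding sum.reindex[OF inj_descent]
    by (intro sum.cong refl) (auto simp: weak_chains_def index_lists_def zeta_t_summand_Cons_descent)
  also have "\<dots> = (\<Sum>m\<in>{0<..<h}. 1 / real m ^ k * zeta_t_trunc t m (l # ks))"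
    by (subst sum.Sigma[symmetric]) (auto simp: finite_weak_chains zeta_t_trunc_def sum_distrib_left)
  also have "sum ?f ?repeat = (\<Sum>ms\<in>weak_chains h ?n. t * zeta_t_summand t ((k + l) # ks) ms)"
    unfolding sum.reindex[OF inj_repeat]
    by (intro sum.cong refl) (auto simp: weak_chains_def index_lists_def zeta_t_summand_Cons_repeat)
  also have "\<dots> = t * zeta_t_trunc t h ((k + l) # ks)"
    by (simp add: zeta_t_trunc_def sum_distrib_left)
  finally show ?thesis .
qed

lemma add_hd_add_hd: "add_hd k (add_hd k' p) = add_hd (k + k') p"
  by (cases p) auto

lemma add_hd_ne_Nil [simp]: "add_hd k p \<noteq> []" "[] \<noteq> add_hd k p"
  by (cases p; simp)+

lemma length_add_hd: "p \<noteq> [] \<Longrightarrow> length (add_hd k p) = length p"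
  by (cases p) auto

lemma length_add_hd_le: "length (add_hd k p) \<le> Suc (length p)"
  by (cases p) auto

lemma merges_add_hd: "ks \<noteq> [] \<Longrightarrow> merges (add_hd k ks) = map (add_hd k) (merges ks)"
proof (induction ks rule: merges.induct)
  case (3 k' l rest)
  show ?case by (simp add: add_hd_add_hd comp_def add.assoc)
qed auto

lemma length_merges_le: "p \<in> set (merges ks) \<Longrightarrow> length p \<le> length ks"
proof (induction ks arbitrary: p rule: merges.induct)
  case (3 k l rest)
  then obtain q where "q \<in> set (merges (l # rest))" "p = k # q \<or> p = add_hd k q"
    by auto
  with 3(1,2)[of q] length_add_hd_le[of k q] show ?case by auto
qed auto

lemma merges_ne_Nil: "p \<in> set (merges ks) \<Longrightarrow> ks \<noteq> [] \<Longrightarrow> p \<noteq> []"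
  by (induction ks arbitrary: p rule: merges.induct) auto

lemma merges_lower_bound:
  "p \<in> set (merges ks) \<Longrightarrow> \<forall>k\<in>set ks. c \<le> k \<Longrightarrow> \<forall>x\<in>set p. c \<le> x"
proof (induction ks arbitrary: p rule: merges.induct)
  case (3 k l rest)
  from 3(3) consider q where "q \<in> set (merges (l # rest))" "p = k # q"
    | q where "q \<in> set (merges (l # rest))" "p = add_hd k q" by auto
  then show ?case
  proof cases
    case 1
    have "\<forall>x\<in>set q. c \<le> x" using 3(2)[OF 1(1)] 3(4) by simp
    thus ?thesis using 1(2) 3(4) by simp
  next
    case 2
    have "\<forall>x\<in>set q. c \<le> x" using 3(1)[OF 2(1)] 3(4) by simp
    thus ?thesis using 2(2) 3(4) by (cases q) auto
  qed
qed auto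

lemma sum_list_map_sum:
  "(\<Sum>p\<leftarrow>xs. \<Sum>m\<in>A. g m p) = (\<Sum>m\<in>A. \<Sum>p\<leftarrow>xs. g m p)"
  by (induction xs) (auto simp: sum.distrib)

lemma sum_merges_add_hd:
  "(\<Sum>p\<leftarrow>merges (l # ks). t ^ (Suc (Suc (length ks)) - length (add_hd k p)) * mzv_trunc h (add_hd k p))
   = t * (\<Sum>q\<leftarrow>merges ((k + l) # ks). t ^ (length ((k + l) # ks) - length q) * mzv_trunc h q)"
proof -
  have "(\<Sum>p\<leftarrow>merges (l # ks). t ^ (Suc (Suc (length ks)) - length (add_hd k p)) * mzv_trunc h (add_hd k p))
      = (\<Sum>p\<leftarrow>merges (l # ks). t * (t ^ (length ((k + l) # ks) - length (add_hd k p)) * mzv_trunc h (add_hd k p)))"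
  proof (intro arg_cong[where f=sum_list] map_cong refl)
    fix p assume "p \<in> set (merges (l # ks))"
    hence "length p \<le> Suc (length ks)" "p \<noteq> []" using length_merges_le merges_ne_Nil by fastforce+
    thus "t ^ (Suc (Suc (length ks)) - length (add_hd k p)) * mzv_trunc h (add_hd k p)
        = t * (t ^ (length ((k + l) # ks) - length (add_hd k p)) * mzv_trunc h (add_hd k p))"
      by (simp add: length_add_hd Suc_diff_le)
  qed
  also have "\<dots> = t * (\<Sum>q\<leftarrow>merges ((k + l) # ks). t ^ (length ((k + l) # ks) - length q) * mzv_trunc h q)"
    using merges_add_hd[of "l # ks" k] by (simp add: sum_list_const_mult comp_def)
  finally show ?thesis .
qed

lemma sum_merges_mzv_trunc:
  "(\<Sum>p\<leftarrow>merges ks. t ^ (length ks - length p) * mzv_trunc h p) = zeta_t_trunc t h ks"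
proof (induction "length ks" arbitrary: ks h rule: less_induct)
  case less
  show ?case
  proof (cases ks rule: merges.cases)
    case 1
    thus ?thesis
      by (simp add: zeta_t_trunc_def weak_chains_0 mzv_trunc_Nil zeta_t_summand_def mzv_summand_def)
  next
    case (2 k)
    have "strict_chains h 1 = weak_chains h 1"
      by (auto simp: strict_chains_def weak_chains_def index_lists_def length_Suc_conv)
    thus ?thesis using 2
      by (auto simp: mzv_trunc_def zeta_t_trunc_def zeta_t_summand_def weak_chains_def
          index_lists_def length_Suc_conv intro!: sum.cong)
  next
    case (3 k l rest)
    let ?M = "merges (l # rest)"
    let ?n = "length rest"
    have "(\<Sum>p\<leftarrow>merges ks. t ^ (length ks - length p) * mzv_trunc h p)
       = (\<Sum>p\<leftarrow>?M. t ^ (Suc (Suc ?n) - length (k # p)) * mzv_trunc h (k # p))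
         + (\<Sum>p\<leftarrow>?M. t ^ (Suc (Suc ?n) - length (add_hd k p)) * mzv_trunc h (add_hd k p))"
      using 3 by (simp only: merges.simps map_append sum_list_append map_map comp_def length_Cons)
    also have "(\<Sum>p\<leftarrow>?M. t ^ (Suc (Suc ?n) - length (k # p)) * mzv_trunc h (k # p))
       = (\<Sum>p\<leftarrow>?M. \<Sum>m\<in>{0<..<h}. 1 / real m ^ k * (t ^ (length (l # rest) - length p) * mzv_trunc m p))"
      by (simp add: mzv_trunc_Cons sum_distrib_left mult.left_commute)
    also have "\<dots> = (\<Sum>m\<in>{0<..<h}. 1 / real m ^ k * zeta_t_trunc t m (l # rest))"
      unfolding sum_list_map_sum sum_list_const_mult using less(1)[of "l # rest"] 3 by simp
    also have "(\<Sum>p\<leftarrow>?M. t ^ (Suc (Suc ?n) - length (add_hd k p)) * mzv_trunc h (add_hd k p))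
       = t * (\<Sum>q\<leftarrow>merges ((k + l) # rest). t ^ (length ((k + l) # rest) - length q) * mzv_trunc h q)"
      by (rule sum_merges_add_hd)
    also have "\<dots> = t * zeta_t_trunc t h ((k + l) # rest)"
      using less(1)[of "(k + l) # rest"] 3 by simp
    finally show ?thesis
      by (simp only: 3 zeta_t_trunc_Cons_Cons)
  qed
qed

section \<open>Convergence of the truncations\<close>

lemma sum_inverse_power_le:
  assumes "k \<ge> 2"
  shows "(\<Sum>m\<in>{0<..<h}. 1 / real m ^ k) \<le> (\<Sum>m. 1 / real m ^ 2)"
proof -
  have "(\<Sum>m\<in>{0<..<h}. 1 / real m ^ k) \<le> (\<Sum>m\<in>{0<..<h}. 1 / real m ^ 2)"
    using assms by (intro sum_mono divide_left_mono power_increasing) auto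
  also have "\<dots> \<le> (\<Sum>m. 1 / real m ^ 2)"
    using inverse_power_summable[of 2, where 'a=real]
    by (intro sum_le_suminf) (auto simp: inverse_eq_divide)
  finally show ?thesis .
qed

lemma mzv_trunc_nonneg: "mzv_trunc h ks \<ge> 0"
  unfolding mzv_trunc_def by (intro sum_nonneg mzv_summand_nonneg)

lemma mzv_trunc_le:
  assumes "\<forall>k\<in>set ks. k \<ge> 2"
  shows "mzv_trunc h ks \<le> (\<Sum>m. 1 / real m ^ 2) ^ length ks"
  using assms
proof (induction ks arbitrary: h)
  case Nil
  thus ?case by (simp add: mzv_trunc_Nil)
next
  case (Cons k ks)
  let ?C = "(\<Sum>m. 1 / real m ^ 2) :: real"
  have IH: "0 \<le> mzv_trunc m ks" "mzv_trunc m ks \<le> ?C ^ length ks" for m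
    using Cons by (auto simp: mzv_trunc_nonneg)
  have "mzv_trunc h (k # ks) \<le> (\<Sum>m\<in>{0<..<h}. 1 / real m ^ k * ?C ^ length ks)"
    unfolding mzv_trunc_Cons using IH by (intro sum_mono mult_left_mono) auto
  also have "\<dots> = (\<Sum>m\<in>{0<..<h}. 1 / real m ^ k) * ?C ^ length ks"
    by (simp add: sum_distrib_right)
  also have "\<dots> \<le> ?C * ?C ^ length ks"
    using Cons.prems IH[of 0] by (intro mult_right_mono sum_inverse_power_le) auto
  finally show ?case by simp
qed

definition all_strict_chains :: "nat \<Rightarrow> nat list set" where
  "all_strict_chains n = {ms. length ms = n \<and> sorted_wrt (>) ms \<and> (\<forall>m\<in>set ms. m > 0)}"

lemma mzv_eq_infsum: "mzv ks = infsum (mzv_summand ks) (all_strict_chains (length ks))"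
  unfolding mzv_def mzv_summand_def[abs_def] all_strict_chains_def ..

lemma strict_chains_subset: "strict_chains h n \<subseteq> all_strict_chains n"
  by (auto simp: strict_chains_def index_lists_def all_strict_chains_def)

lemma eventually_subset_strict_chains:
  assumes "finite X" "X \<subseteq> all_strict_chains n"
  shows "\<forall>\<^sub>F h in sequentially. X \<subseteq> strict_chains h n"
proof (rule eventually_sequentiallyI)
  fix h assume h: "h \<ge> Suc (Max (insert 0 (\<Union>ms\<in>X. set ms)))"
  have "m < h" if "ms \<in> X" "m \<in> set ms" for ms m
  proof -
    have "m \<le> Max (insert 0 (\<Union>ms\<in>X. set ms))"
      using that assms(1) by (intro Max_ge) auto
    thus ?thesis using h by linarith
  qed
  thus "X \<subseteq> strict_chains h n"
    using assms(2) by (auto simp: strict_chains_def index_lists_def all_strict_chains_def)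
qed

lemma mzv_summand_summable_on:
  assumes "\<forall>k\<in>set ks. k \<ge> 2"
  shows "mzv_summand ks summable_on all_strict_chains (length ks)"
proof (rule nonneg_bdd_above_summable_on)
  show "bdd_above (sum (mzv_summand ks) ` {F. F \<subseteq> all_strict_chains (length ks) \<and> finite F})"
  proof (rule bdd_aboveI2)
    fix F assume "F \<in> {F. F \<subseteq> all_strict_chains (length ks) \<and> finite F}"
    hence "\<forall>\<^sub>F h in sequentially. F \<subseteq> strict_chains h (length ks)"
      by (intro eventually_subset_strict_chains) auto
    then obtain h where "F \<subseteq> strict_chains h (length ks)"
      unfolding eventually_sequentially by blast
    hence "sum (mzv_summand ks) F \<le> mzv_trunc h ks"
      unfolding mzv_trunc_def by (intro sum_mono2 finite_strict_chains mzv_summand_nonneg)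
    also have "\<dots> \<le> (\<Sum>m. 1 / real m ^ 2) ^ length ks"
      using assms by (rule mzv_trunc_le)
    finally show "sum (mzv_summand ks) F \<le> (\<Sum>m. 1 / real m ^ 2) ^ length ks" .
  qed
qed (rule mzv_summand_nonneg)

lemma tendsto_mzv_trunc:
  assumes "\<forall>k\<in>set ks. k \<ge> 2"
  shows "(\<lambda>h. mzv_trunc h ks) \<longlonglongrightarrow> mzv ks"
proof -
  let ?A = "all_strict_chains (length ks)"
  have "(sum (mzv_summand ks) \<longlongrightarrow> mzv ks) (finite_subsets_at_top ?A)"
    using has_sum_infsum[OF mzv_summand_summable_on[OF assms]]
    by (simp add: has_sum_def mzv_eq_infsum)
  moreover have "filterlim (\<lambda>h. strict_chains h (length ks)) (finite_subsets_at_top ?A) sequentially"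
    unfolding filterlim_finite_subsets_at_top
  proof (intro allI impI)
    fix X assume "finite X \<and> X \<subseteq> ?A"
    hence "\<forall>\<^sub>F h in sequentially. X \<subseteq> strict_chains h (length ks)"
      by (intro eventually_subset_strict_chains) auto
    thus "\<forall>\<^sub>F h in sequentially. finite (strict_chains h (length ks))
            \<and> X \<subseteq> strict_chains h (length ks) \<and> strict_chains h (length ks) \<subseteq> ?A"
      by eventually_elim (simp add: finite_strict_chains strict_chains_subset)
  qed
  ultimately show ?thesis
    unfolding mzv_trunc_def by (rule filterlim_compose)
qed

lemma tendsto_sum_list:
  fixes g :: "'a \<Rightarrow> 'b :: topological_monoid_add"
  assumes "\<And>x. x \<in> set xs \<Longrightarrow> ((\<lambda>h. f h x) \<longlongrightarrow> g x) F"
  shows "((\<lambda>h. \<Sum>x\<leftarrow>xs. f h x) \<longlongrightarrow> (\<Sum>x\<leftarrow>xs. g x)) F"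
  using assms by (induction xs) (auto intro!: tendsto_add)

lemma tendsto_zeta_t_trunc:
  assumes "\<forall>k\<in>set ks. k \<ge> 2"
  shows "(\<lambda>h. zeta_t_trunc t h ks) \<longlonglongrightarrow> zeta_t t ks"
proof -
  have "(\<lambda>h. \<Sum>p\<leftarrow>merges ks. t ^ (length ks - length p) * mzv_trunc h p)
        \<longlonglongrightarrow> (\<Sum>p\<leftarrow>merges ks. t ^ (length ks - length p) * mzv p)"
    using assms merges_lower_bound by (intro tendsto_sum_list tendsto_mult_left tendsto_mzv_trunc) blast
  thus ?thesis by (simp add: sum_merges_mzv_trunc zeta_t_def)
qed

section \<open>Summing over permutations\<close>

lemma permute_list_inv_permute_list:
  assumes "\<sigma> permutes {..<length xs}"
  shows "permute_list (inv \<sigma>) (permute_list \<sigma> xs) = xs"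
  using assms permutes_inv[OF assms] permutes_inv_o(1)[OF assms]
  by (simp add: permute_list_compose[symmetric])

lemma permute_list_permute_list_inv:
  assumes "\<sigma> permutes {..<length xs}"
  shows "permute_list \<sigma> (permute_list (inv \<sigma>) xs) = xs"
  using assms permutes_inv_o(2)[OF assms]
  by (simp add: permute_list_compose[symmetric])

text \<open>All fibres of \<open>\<sigma> \<mapsto> permute_list \<sigma> xs\<close> over rearrangements of \<open>xs\<close> are cosets of
  the stabiliser of \<open>xs\<close>.\<close>
lemma card_permutes_permute_list_eq:
  fixes xs ys :: "'a list"
  assumes "mset ys = mset xs"
  shows "card {\<sigma>. \<sigma> permutes {..<length xs} \<and> permute_list \<sigma> xs = ys}
       = card {\<tau>. \<tau> permutes {..<length xs} \<and> permute_list \<tau> xs = xs}"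
proof -
  let ?S = "{..<length xs}"
  obtain \<sigma>\<^sub>0 where \<sigma>\<^sub>0: "\<sigma>\<^sub>0 permutes ?S" "permute_list \<sigma>\<^sub>0 xs = ys"
    using mset_eq_permutation[OF assms] by blast
  have "bij_betw (\<lambda>\<tau>. \<tau> \<circ> \<sigma>\<^sub>0) {\<tau>. \<tau> permutes ?S \<and> permute_list \<tau> xs = xs}
           {\<sigma>. \<sigma> permutes ?S \<and> permute_list \<sigma> xs = ys}"
  proof (rule bij_betw_byWitness[where f'="\<lambda>\<sigma>. \<sigma> \<circ> inv \<sigma>\<^sub>0"])
    show "\<forall>\<tau>\<in>{\<tau>. \<tau> permutes ?S \<and> permute_list \<tau> xs = xs}. \<tau> \<circ> \<sigma>\<^sub>0 \<circ> inv \<sigma>\<^sub>0 = \<tau>"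
      using permutes_inv_o(1)[OF \<sigma>\<^sub>0(1)] by (simp add: o_assoc[symmetric])
    show "\<forall>\<sigma>\<in>{\<sigma>. \<sigma> permutes ?S \<and> permute_list \<sigma> xs = ys}. \<sigma> \<circ> inv \<sigma>\<^sub>0 \<circ> \<sigma>\<^sub>0 = \<sigma>"
      using permutes_inv_o(2)[OF \<sigma>\<^sub>0(1)] by (simp add: o_assoc[symmetric])
    show "(\<lambda>\<tau>. \<tau> \<circ> \<sigma>\<^sub>0) ` {\<tau>. \<tau> permutes ?S \<and> permute_list \<tau> xs = xs}
          \<subseteq> {\<sigma>. \<sigma> permutes ?S \<and> permute_list \<sigma> xs = ys}"
      using \<sigma>\<^sub>0 by (auto simp: permutes_compose permute_list_compose)
    show "(\<lambda>\<sigma>. \<sigma> \<circ> inv \<sigma>\<^sub>0) ` {\<sigma>. \<sigma> permutes ?S \<and> permute_list \<sigma> xs = ys}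
          \<subseteq> {\<tau>. \<tau> permutes ?S \<and> permute_list \<tau> xs = xs}"
      using \<sigma>\<^sub>0 permutes_inv[OF \<sigma>\<^sub>0(1)] permute_list_inv_permute_list[of \<sigma>\<^sub>0 xs]
      by (auto simp: permutes_compose permute_list_compose)
  qed
  thus ?thesis by (simp add: bij_betw_same_card)
qed

lemma card_stabilizer_permute_list:
  fixes xs :: "'a list"
  shows "card {\<tau>. \<tau> permutes {..<length xs} \<and> permute_list \<tau> xs = xs}
       = (\<Prod>x\<in>set xs. fact (count (mset xs) x))"
proof -
  let ?P = "{\<sigma>. \<sigma> permutes {..<length xs}}"
  let ?T = "permutations_of_multiset (mset xs)"
  let ?stab = "card {\<tau>. \<tau> permutes {..<length xs} \<and> permute_list \<tau> xs = xs}"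
  have fin_P: "finite ?P" by (rule finite_permutations) simp
  have img: "(\<lambda>\<sigma>. permute_list \<sigma> xs) ` ?P \<subseteq> ?T"
    by (auto simp: permutations_of_multiset_def)
  have "fact (length xs) = card ?P" by (simp add: card_permutations)
  also have "\<dots> = (\<Sum>ys\<in>?T. card {\<sigma>\<in>?P. permute_list \<sigma> xs = ys})"
    using sum.group[OF fin_P finite_permutations_of_multiset img, of "\<lambda>_. 1::nat"] by simp
  also have "\<dots> = (\<Sum>ys\<in>?T. ?stab)"
    using card_permutes_permute_list_eq
    by (intro sum.cong refl) (simp add: permutations_of_multiset_def)
  finally have "fact (length xs) = card ?T * ?stab" by simp
  moreover have "card ?T * (\<Prod>x\<in>set xs. fact (count (mset xs) x)) = fact (length xs)"
    using card_permutations_of_multiset_aux[of "mset xs"] by simp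
  moreover have "card ?T > 0"
    using finite_permutations_of_multiset card_gt_0_iff
    by (metis (full_types) empty_iff permutations_of_multisetI)
  ultimately show ?thesis by (metis mult_left_cancel neq0_conv)
qed

lemma card_permutes_sorting:
  fixes xs :: "'a :: linorder list"
  shows "card {\<sigma>. \<sigma> permutes {..<length xs} \<and> sorted_wrt (\<ge>) (permute_list \<sigma> xs)}
       = (\<Prod>x\<in>set xs. fact (count (mset xs) x))"
proof -
  have sorted_iff: "sorted_wrt (\<ge>) ys \<longleftrightarrow> ys = rev (sort xs)" if "mset ys = mset xs" for ys
  proof
    assume "sorted_wrt (\<ge>) ys"
    hence "sort xs = rev ys" using that by (intro properties_for_sort) (simp_all add: sorted_wrt_rev)
    thus "ys = rev (sort xs)" by simp
  qed (simp add: sorted_wrt_rev)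
  have "{\<sigma>. \<sigma> permutes {..<length xs} \<and> sorted_wrt (\<ge>) (permute_list \<sigma> xs)}
      = {\<sigma>. \<sigma> permutes {..<length xs} \<and> permute_list \<sigma> xs = rev (sort xs)}"
    using sorted_iff by auto
  thus ?thesis
    using card_permutes_permute_list_eq[of "rev (sort xs)" xs] card_stabilizer_permute_list[of xs]
    by simp
qed

lemma mzv_summand_permute_list:
  assumes "\<sigma> permutes {..<length ks}" "length ms = length ks"
  shows "mzv_summand (permute_list \<sigma> ks) (permute_list \<sigma> ms) = mzv_summand ks ms"
proof -
  have "mzv_summand (permute_list \<sigma> ks) (permute_list \<sigma> ms)
      = (\<Prod>i<length ks. 1 / real (ms ! \<sigma> i) ^ (ks ! \<sigma> i))"
    unfolding mzv_summand_def length_permute_list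
    using assms by (intro prod.cong refl) (simp add: permute_list_nth)
  also have "\<dots> = mzv_summand ks ms"
    using prod.permute[OF assms(1), of "\<lambda>i. 1 / real (ms ! i) ^ (ks ! i)"]
    by (simp add: comp_def mzv_summand_def)
  finally show ?thesis .
qed

lemma zeta_t_trunc_permute_list:
  assumes "\<sigma> permutes {..<length ks}"
  shows "zeta_t_trunc t h (permute_list \<sigma> ks) = (\<Sum>ms\<in>index_lists h (length ks).
           if sorted_wrt (\<ge>) (permute_list \<sigma> ms) then zeta_t_summand t ks ms else 0)"
proof -
  let ?n = "length ks"
  let ?S = "{ms \<in> index_lists h ?n. sorted_wrt (\<ge>) (permute_list \<sigma> ms)}"
  have bij: "bij_betw (permute_list \<sigma>) ?S (weak_chains h ?n)"
  proof (rule bij_betw_byWitness[where f'="permute_list (inv \<sigma>)"])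
    show "\<forall>ms\<in>?S. permute_list (inv \<sigma>) (permute_list \<sigma> ms) = ms"
      using assms by (auto simp: index_lists_def intro!: permute_list_inv_permute_list)
    show "\<forall>ms\<in>weak_chains h ?n. permute_list \<sigma> (permute_list (inv \<sigma>) ms) = ms"
      using assms by (auto simp: weak_chains_def index_lists_def intro!: permute_list_permute_list_inv)
    show "permute_list \<sigma> ` ?S \<subseteq> weak_chains h ?n"
      using assms by (auto simp: index_lists_def weak_chains_def)
    show "permute_list (inv \<sigma>) ` weak_chains h ?n \<subseteq> ?S"
      using assms permutes_inv[OF assms]
      by (auto simp: weak_chains_def index_lists_def permute_list_permute_list_inv)
  qed
  have "zeta_t_trunc t h (permute_list \<sigma> ks)
      = (\<Sum>ms\<in>?S. zeta_t_summand t (permute_list \<sigma> ks) (permute_list \<sigma> ms))"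
    unfolding zeta_t_trunc_def length_permute_list by (rule sum.reindex_bij_betw[OF bij, symmetric])
  also have "\<dots> = (\<Sum>ms\<in>?S. zeta_t_summand t ks ms)"
    using assms by (intro sum.cong refl)
      (simp add: zeta_t_summand_def index_lists_def mzv_summand_permute_list)
  also have "\<dots> = (\<Sum>ms\<in>index_lists h ?n.
                   if sorted_wrt (\<ge>) (permute_list \<sigma> ms) then zeta_t_summand t ks ms else 0)"
    by (rule sum.inter_filter[OF finite_index_lists])
  finally show ?thesis .
qed

text \<open>Each index list is sorted by exactly as many permutations as its stabiliser has elements.\<close>
lemma sum_permutes_zeta_t_trunc:
  "(\<Sum>\<sigma>\<in>{\<sigma>. \<sigma> permutes {..<length ks}}. zeta_t_trunc t h (permute_list \<sigma> ks))
   = (\<Sum>ms\<in>index_lists h (length ks).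
        zeta_t_summand t ks ms * (\<Prod>m\<in>set ms. fact (count (mset ms) m)))"
proof -
  let ?P = "{\<sigma>. \<sigma> permutes {..<length ks}}"
  have fin_P: "finite ?P" by (rule finite_permutations) simp
  have "(\<Sum>\<sigma>\<in>?P. zeta_t_trunc t h (permute_list \<sigma> ks))
      = (\<Sum>ms\<in>index_lists h (length ks). \<Sum>\<sigma>\<in>?P.
           if sorted_wrt (\<ge>) (permute_list \<sigma> ms) then zeta_t_summand t ks ms else 0)"
    by (simp add: zeta_t_trunc_permute_list sum.swap[of _ ?P])
  also have "\<dots> = (\<Sum>ms\<in>index_lists h (length ks).
       real (card {\<sigma>\<in>?P. sorted_wrt (\<ge>) (permute_list \<sigma> ms)}) * zeta_t_summand t ks ms)"
    by (simp add: sum.If_cases[OF fin_P] Int_def conj_commute)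
  also have "\<dots> = (\<Sum>ms\<in>index_lists h (length ks).
                   zeta_t_summand t ks ms * (\<Prod>m\<in>set ms. fact (count (mset ms) m)))"
  proof (intro sum.cong refl)
    fix ms assume "ms \<in> index_lists h (length ks)"
    hence "length ms = length ks" by (simp add: index_lists_def)
    thus "real (card {\<sigma>\<in>?P. sorted_wrt (\<ge>) (permute_list \<sigma> ms)}) * zeta_t_summand t ks ms
        = zeta_t_summand t ks ms * (\<Prod>m\<in>set ms. fact (count (mset ms) m))"
      using card_permutes_sorting[of ms] by simp
  qed
  finally show ?thesis .
qed

section \<open>Sums over set partitions\<close>

definition const_on_blocks :: "('a \<Rightarrow> 'b) \<Rightarrow> 'a set set \<Rightarrow> bool" where
  "const_on_blocks g P \<longleftrightarrow> (\<forall>B\<in>P. \<forall>i\<in>B. \<forall>j\<in>B. g i = g j)"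

definition block_of :: "'a set set \<Rightarrow> 'a \<Rightarrow> 'a set" where
  "block_of P l = (THE B. B \<in> P \<and> l \<in> B)"

lemma block_of_mem:
  assumes "partition_on A P" "l \<in> A"
  shows "block_of P l \<in> P" "l \<in> block_of P l"
proof -
  have "\<exists>!B. B \<in> P \<and> l \<in> B"
    using partition_onD1[OF assms(1)] partition_onD2[OF assms(1)] assms(2)
    by (auto simp: disjoint_def)
  hence "block_of P l \<in> P \<and> l \<in> block_of P l"
    unfolding block_of_def by (rule theI')
  thus "block_of P l \<in> P" "l \<in> block_of P l" by auto
qed

lemma block_of_eq:
  assumes "partition_on A P" "B \<in> P" "l \<in> B"
  shows "block_of P l = B"
proof -
  have "l \<in> A" using partition_onD1[OF assms(1)] assms(2,3) by auto
  hence "block_of P l \<in> P" "l \<in> block_of P l" using block_of_mem[OF assms(1)] by auto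
  thus ?thesis
    using disjointD[OF partition_onD2[OF assms(1)] _ assms(2)] assms(3) by blast
qed

lemma const_on_blocks_block_values:
  assumes P: "partition_on {..<n} P"
  shows "const_on_blocks (nth (map (\<lambda>l. g (block_of P l)) [0..<n])) P"
  unfolding const_on_blocks_def
proof (intro ballI)
  fix B i j assume "B \<in> P" "i \<in> B" "j \<in> B"
  moreover from this have "i < n" "j < n" using partition_onD1[OF P] by auto
  ultimately show "map (\<lambda>l. g (block_of P l)) [0..<n] ! i = map (\<lambda>l. g (block_of P l)) [0..<n] ! j"
    using block_of_eq[OF P] by simp
qed

lemma bij_betw_block_values:
  assumes P: "partition_on {..<n} P"
  shows "bij_betw (\<lambda>g. map (\<lambda>l. g (block_of P l)) [0..<n]) (PiE P (\<lambda>_. V))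
           {xs. length xs = n \<and> set xs \<subseteq> V \<and> const_on_blocks (nth xs) P}"
proof -
  define rep where "rep B = (SOME l. l \<in> B)" for B :: "nat set"
  have rep: "rep B \<in> B" "rep B < n" if "B \<in> P" for B
  proof -
    have "B \<noteq> {}" using partition_onD3[OF P] that by auto
    hence "rep B \<in> B" unfolding rep_def by (simp add: some_in_eq)
    moreover have "B \<subseteq> {..<n}" using partition_onD1[OF P] that by auto
    ultimately show "rep B \<in> B" "rep B < n" by auto
  qed
  let ?L = "{xs. length xs = n \<and> set xs \<subseteq> V \<and> const_on_blocks (nth xs) P}"
  let ?values = "\<lambda>g. map (\<lambda>l. g (block_of P l)) [0..<n]"
  show ?thesis
  proof (rule bij_betw_byWitness[where f'="\<lambda>xs. \<lambda>B\<in>P. xs ! rep B"])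
    show "\<forall>g\<in>PiE P (\<lambda>_. V). (\<lambda>B\<in>P. ?values g ! rep B) = g"
    proof (intro ballI ext)
      fix g B assume g: "g \<in> PiE P (\<lambda>_. V)"
      show "(\<lambda>B\<in>P. ?values g ! rep B) B = g B"
      proof (cases "B \<in> P")
        case True
        thus ?thesis using rep[OF True] block_of_eq[OF P True] by simp
      next
        case False
        thus ?thesis using g by (simp add: PiE_def extensional_def)
      qed
    qed
    show "\<forall>xs\<in>?L. ?values (\<lambda>B\<in>P. xs ! rep B) = xs"
    proof (intro ballI nth_equalityI)
      fix xs i assume xs: "xs \<in> ?L" and i: "i < length (?values (\<lambda>B\<in>P. xs ! rep B))"
      hence "i < n" by simp
      hence B: "block_of P i \<in> P" "i \<in> block_of P i" using block_of_mem[OF P] by auto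
      hence "?values (\<lambda>B\<in>P. xs ! rep B) ! i = xs ! rep (block_of P i)" using \<open>i < n\<close> by simp
      also have "\<dots> = xs ! i"
        using xs B rep(1)[OF B(1)] unfolding const_on_blocks_def by blast
      finally show "?values (\<lambda>B\<in>P. xs ! rep B) ! i = xs ! i" .
    qed simp
    show "?values ` PiE P (\<lambda>_. V) \<subseteq> ?L"
    proof (rule image_subsetI)
      fix g assume g: "g \<in> PiE P (\<lambda>_. V)"
      have "g (block_of P l) \<in> V" if "l < n" for l
        using g block_of_mem(1)[OF P, of l] that by (auto simp: PiE_iff)
      thus "?values g \<in> ?L" using const_on_blocks_block_values[OF P] by auto
    qed
    show "(\<lambda>xs. \<lambda>B\<in>P. xs ! rep B) ` ?L \<subseteq> PiE P (\<lambda>_. V)"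
    proof (rule image_subsetI)
      fix xs assume "xs \<in> ?L"
      hence "xs ! rep B \<in> V" if "B \<in> P" for B using rep[OF that] nth_mem[of "rep B" xs] by auto
      thus "(\<lambda>B\<in>P. xs ! rep B) \<in> PiE P (\<lambda>_. V)" by simp
    qed
  qed
qed

lemma mzv_summand_block_values:
  assumes P: "partition_on {..<length ks} P"
  shows "mzv_summand ks (map (\<lambda>l. g (block_of P l)) [0..<length ks])
       = (\<Prod>B\<in>P. 1 / real (g B) ^ (\<Sum>l\<in>B. ks ! l))"
proof -
  have "(\<Prod>B\<in>P. 1 / real (g B) ^ (\<Sum>l\<in>B. ks ! l)) = (\<Prod>B\<in>P. \<Prod>l\<in>B. 1 / real (g B) ^ (ks ! l))"
    by (simp add: power_sum prod_dividef)
  also have "\<dots> = (\<Prod>B\<in>P. \<Prod>l\<in>B. 1 / real (g (block_of P l)) ^ (ks ! l))"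
    using block_of_eq[OF P] by (intro prod.cong refl) simp
  also have "\<dots> = (\<Prod>l<length ks. 1 / real (g (block_of P l)) ^ (ks ! l))"
    by (rule prod.partition[OF _ P, symmetric]) simp
  finally show ?thesis by (simp add: mzv_summand_def)
qed

lemma prod_mzv_trunc_blocks:
  assumes P: "partition_on {..<length ks} P"
  shows "(\<Prod>B\<in>P. mzv_trunc h [\<Sum>l\<in>B. ks ! l])
       = (\<Sum>ms\<in>index_lists h (length ks). if const_on_blocks (nth ms) P then mzv_summand ks ms else 0)"
proof -
  let ?V = "{0<..<h}"
  have "finite P" using finite_elements[OF _ P] by simp
  hence "(\<Prod>B\<in>P. mzv_trunc h [\<Sum>l\<in>B. ks ! l])
      = (\<Sum>g\<in>PiE P (\<lambda>_. ?V). \<Prod>B\<in>P. 1 / real (g B) ^ (\<Sum>l\<in>B. ks ! l))"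
    by (simp add: mzv_trunc_singleton prod_sum_PiE)
  also have "\<dots> = (\<Sum>g\<in>PiE P (\<lambda>_. ?V). mzv_summand ks (map (\<lambda>l. g (block_of P l)) [0..<length ks]))"
    by (simp add: mzv_summand_block_values[OF P])
  also have "\<dots> = (\<Sum>ms\<in>{ms. length ms = length ks \<and> set ms \<subseteq> ?V \<and> const_on_blocks (nth ms) P}.
                   mzv_summand ks ms)"
    by (rule sum.reindex_bij_betw[OF bij_betw_block_values[OF P]])
  also have "{ms. length ms = length ks \<and> set ms \<subseteq> ?V \<and> const_on_blocks (nth ms) P}
           = {ms \<in> index_lists h (length ks). const_on_blocks (nth ms) P}"
    by (auto simp: index_lists_def)
  also have "(\<Sum>ms\<in>\<dots>. mzv_summand ks ms)
      = (\<Sum>ms\<in>index_lists h (length ks). if const_on_blocks (nth ms) P then mzv_summand ks ms else 0)"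
    by (rule sum.inter_filter[OF finite_index_lists])
  finally show ?thesis .
qed

definition fiber_partition_sum :: "real \<Rightarrow> ('a \<Rightarrow> 'b) \<Rightarrow> 'a set \<Rightarrow> real" where
  "fiber_partition_sum t g J =
     (\<Sum>P\<in>{P. partition_on J P \<and> const_on_blocks g P}. \<Prod>B\<in>P. c_coef (card B) t)"

lemma fiber_partition_sum_empty: "fiber_partition_sum t g {} = 1"
proof -
  have "{P. partition_on {} P \<and> const_on_blocks g P} = {{}}"
    by (auto simp: partition_on_empty const_on_blocks_def)
  thus ?thesis by (simp add: fiber_partition_sum_def)
qed

lemma insert_block_eq_iff:
  assumes "x \<notin> S" "x \<notin> S'" "x \<notin> \<Union>Q" "x \<notin> \<Union>Q'"
  shows "insert (insert x S) Q = insert (insert x S') Q' \<longleftrightarrow> S = S' \<and> Q = Q'"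
proof
  assume eq: "insert (insert x S) Q = insert (insert x S') Q'"
  have not_in: "insert x S \<notin> Q" "insert x S \<notin> Q'" "insert x S' \<notin> Q'"
    using assms(3,4) by auto
  have "insert x S \<in> insert (insert x S') Q'" using eq by (metis insertI1)
  hence "insert x S = insert x S'" using not_in(2) by simp
  hence "S = S'" using assms(1,2) by (metis Diff_insert_absorb)
  moreover note not_in(1,3)
  ultimately show "S = S' \<and> Q = Q'" using eq by (metis insert_ident)
qed simp

lemma partition_on_insert_block:
  assumes "x \<notin> J" "S \<subseteq> J" "partition_on (J - S) Q"
  shows "partition_on (insert x J) (insert (insert x S) Q)"
proof -
  have disj: "disjnt (insert x S) (\<Union>Q)"
    using partition_onD1[OF assms(3)] assms(1) by (auto simp: disjnt_def)
  have "insert x J - insert x S = J - S" using assms(1) by auto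
  thus ?thesis unfolding partition_on_insert[OF disj] using assms(2,3) by auto
qed

lemma partition_on_remove_block:
  assumes "partition_on A P" "B \<in> P"
  shows "partition_on (A - B) (P - {B})"
proof -
  have "disjnt B (\<Union>(P - {B}))"
    using partition_onD2[OF assms(1)] assms(2) unfolding disjnt_def disjoint_def by blast
  hence "partition_on A (insert B (P - {B})) \<longleftrightarrow> partition_on (A - B) (P - {B}) \<and> B \<subseteq> A \<and> B \<noteq> {}"
    by (rule partition_on_insert)
  moreover have "insert B (P - {B}) = P" using assms(2) by blast
  ultimately show ?thesis using assms(1) by simp
qed

lemma bij_betw_insert_block:
  assumes x: "x \<notin> J"
  shows "bij_betw (\<lambda>(S, Q). insert (insert x S) Q)
           (SIGMA S:{S. S \<subseteq> J \<and> (\<forall>i\<in>S. g i = g x)}. {Q. partition_on (J - S) Q \<and> const_on_blocks g Q})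
           {P. partition_on (insert x J) P \<and> const_on_blocks g P}"
proof (rule bij_betw_imageI)
  let ?Subs = "{S. S \<subseteq> J \<and> (\<forall>i\<in>S. g i = g x)}"
  let ?Q = "\<lambda>S. {Q. partition_on (J - S) Q \<and> const_on_blocks g Q}"
  have x_notin: "x \<notin> S" "x \<notin> \<Union>Q" if "S \<in> ?Subs" "Q \<in> ?Q S" for S Q
    using that x partition_onD1[of "J - S" Q] by auto
  show "inj_on (\<lambda>(S, Q). insert (insert x S) Q) (SIGMA S:?Subs. ?Q S)"
  proof (rule inj_onI)
    fix p p' assume p_mem: "p \<in> (SIGMA S:?Subs. ?Q S)" and p'_mem: "p' \<in> (SIGMA S:?Subs. ?Q S)"
      and eq: "(\<lambda>(S, Q). insert (insert x S) Q) p = (\<lambda>(S, Q). insert (insert x S) Q) p'"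
    obtain S Q where p: "p = (S, Q)" and S: "S \<in> ?Subs" and Q: "Q \<in> ?Q S"
      using p_mem by blast
    obtain S' Q' where p': "p' = (S', Q')" and S': "S' \<in> ?Subs" and Q': "Q' \<in> ?Q S'"
      using p'_mem by blast
    have "insert (insert x S) Q = insert (insert x S') Q'" using eq by (simp add: p p')
    thus "p = p'"
      using insert_block_eq_iff[OF x_notin(1)[OF S Q] x_notin(1)[OF S' Q'] x_notin(2)[OF S Q]
          x_notin(2)[OF S' Q']]
      by (simp add: p p')
  qed
  show "(\<lambda>(S, Q). insert (insert x S) Q) ` (SIGMA S:?Subs. ?Q S)
        = {P. partition_on (insert x J) P \<and> const_on_blocks g P}"
  proof (intro equalityI subsetI)
    fix P assume "P \<in> (\<lambda>(S, Q). insert (insert x S) Q) ` (SIGMA S:?Subs. ?Q S)"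
    then obtain S Q where S: "S \<in> ?Subs" and Q: "Q \<in> ?Q S" and P: "P = insert (insert x S) Q"
      by auto
    have "partition_on (insert x J) P" unfolding P using x S Q by (intro partition_on_insert_block) auto
    moreover have "const_on_blocks g P"
    proof -
      have "const_on_blocks g Q" using Q by simp
      moreover have "\<forall>i\<in>insert x S. \<forall>j\<in>insert x S. g i = g j" using S by auto
      ultimately show ?thesis unfolding P const_on_blocks_def by blast
    qed
    ultimately show "P \<in> {P. partition_on (insert x J) P \<and> const_on_blocks g P}" by simp
  next
    fix P assume "P \<in> {P. partition_on (insert x J) P \<and> const_on_blocks g P}"
    hence P: "partition_on (insert x J) P" and c: "const_on_blocks g P" by auto
    obtain B where B: "B \<in> P" "x \<in> B" using partition_onD1[OF P] by auto
    define Q where "Q = P - {B}"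
    define S where "S = B - {x}"
    have PQ: "P = insert B Q" using B(1) by (auto simp: Q_def)
    have BS: "B = insert x S" using B(2) by (auto simp: S_def)
    have "insert x J - B = J - S" using x BS by auto
    hence "partition_on (J - S) Q" using partition_on_remove_block[OF P B(1)] by (simp add: Q_def)
    moreover have "S \<subseteq> J" using partition_onD1[OF P] B(1) by (auto simp: S_def)
    moreover have "\<forall>i\<in>S. g i = g x" using c B unfolding const_on_blocks_def S_def by blast
    moreover have "const_on_blocks g Q" using c unfolding const_on_blocks_def Q_def by blast
    ultimately have "(S, Q) \<in> (SIGMA S:?Subs. ?Q S)" by simp
    moreover have "P = (\<lambda>(S, Q). insert (insert x S) Q) (S, Q)" by (simp add: PQ BS)
    ultimately show "P \<in> (\<lambda>(S, Q). insert (insert x S) Q) ` (SIGMA S:?Subs. ?Q S)"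
      by (intro image_eqI)
  qed
qed

lemma fiber_partition_sum_insert:
  assumes fin: "finite J" and x: "x \<notin> J"
  shows "fiber_partition_sum t g (insert x J)
       = (\<Sum>S\<in>{S. S \<subseteq> J \<and> (\<forall>i\<in>S. g i = g x)}. c_coef (Suc (card S)) t * fiber_partition_sum t g (J - S))"
proof -
  let ?Subs = "{S. S \<subseteq> J \<and> (\<forall>i\<in>S. g i = g x)}"
  let ?Q = "\<lambda>S. {Q. partition_on (J - S) Q \<and> const_on_blocks g Q}"
  let ?w = "\<lambda>P. \<Prod>B\<in>P. c_coef (card B) t"
  have fin_Subs: "finite ?Subs" by (rule finite_subset[of _ "Pow J"]) (use fin in auto)
  have fin_Q: "finite (?Q S)" for S
    by (rule finite_subset[OF _ finitely_many_partition_on[of "J - S"]]) (use fin in auto)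
  have "(\<Sum>S\<in>?Subs. c_coef (Suc (card S)) t * fiber_partition_sum t g (J - S))
      = (\<Sum>(S, Q)\<in>(SIGMA S:?Subs. ?Q S). c_coef (Suc (card S)) t * ?w Q)"
    unfolding fiber_partition_sum_def sum_distrib_left
    by (rule sum.Sigma[OF fin_Subs]) (use fin_Q in blast)
  also have "\<dots> = (\<Sum>p\<in>(SIGMA S:?Subs. ?Q S). ?w ((\<lambda>(S, Q). insert (insert x S) Q) p))"
  proof (rule sum.cong[OF refl])
    fix p assume "p \<in> (SIGMA S:?Subs. ?Q S)"
    then obtain S Q where p: "p = (S, Q)" and S: "S \<in> ?Subs" and Q: "Q \<in> ?Q S" by auto
    have "finite Q" using Q fin by (intro finite_elements[of "J - S"]) auto
    moreover have "insert x S \<notin> Q" using Q x partition_onD1[of "J - S" Q] by auto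
    moreover have "finite S" using S fin by (blast intro: finite_subset)
    moreover have "x \<notin> S" using S x by blast
    ultimately show "(case p of (S, Q) \<Rightarrow> c_coef (Suc (card S)) t * ?w Q)
        = ?w ((\<lambda>(S, Q). insert (insert x S) Q) p)"
      unfolding p by simp
  qed
  also have "\<dots> = fiber_partition_sum t g (insert x J)"
    unfolding fiber_partition_sum_def by (rule sum.reindex_bij_betw[OF bij_betw_insert_block[OF x]])
  finally show ?thesis ..
qed

lemma sum_subsets_by_card:
  assumes "finite F"
  shows "(\<Sum>S\<in>{S. S \<subseteq> F}. f (card S)) = (\<Sum>j\<le>card F. of_nat (card F choose j) * (f j :: 'a :: comm_semiring_1))"
proof -
  have "card ` {S. S \<subseteq> F} \<subseteq> {..card F}" using assms by (auto intro: card_mono)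
  hence "(\<Sum>S\<in>{S. S \<subseteq> F}. f (card S)) = (\<Sum>j\<le>card F. \<Sum>S\<in>{S. S \<subseteq> F \<and> card S = j}. f (card S))"
    using assms by (subst sum.group[symmetric]) (auto intro!: sum.cong)
  also have "\<dots> = (\<Sum>j\<le>card F. of_nat (card F choose j) * f j)"
    using n_subsets[OF assms] by (intro sum.cong refl) simp
  finally show ?thesis .
qed

text \<open>The value of \<open>\<Sum>\<^sub>\<Pi> c\<^sub>\<Pi>(t)\<close> over the partitions \<open>\<Pi>\<close> of an \<open>m\<close>-element set. For \<open>m = 0\<close>, truncated
  subtraction gives \<open>1\<close>, the weight of the empty partition.\<close>
definition c_partition_total :: "real \<Rightarrow> nat \<Rightarrow> real" where
  "c_partition_total t m = t ^ (m - 1) * fact m"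

lemma sum_pow_diff_mult_pow:
  "(\<Sum>j<a. (t ^ Suc j - (t - 1) ^ Suc j) * t ^ (a - Suc j)) + (t ^ Suc a - (t - 1) ^ Suc a)
   = real (Suc a) * t ^ a"
proof (induction a)
  case (Suc a)
  let ?u = "\<lambda>j. t ^ Suc j - (t - 1) ^ Suc j"
  have shift: "(\<Sum>j<a. ?u j * t ^ (a - j)) = t * (\<Sum>j<a. ?u j * t ^ (a - Suc j))"
    unfolding sum_distrib_left
  proof (intro sum.cong refl)
    fix j assume "j \<in> {..<a}"
    hence "a - j = Suc (a - Suc j)" by simp
    thus "?u j * t ^ (a - j) = t * (?u j * t ^ (a - Suc j))" by simp
  qed
  have IH: "(\<Sum>j<a. ?u j * t ^ (a - Suc j)) = real (Suc a) * t ^ a - ?u a"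
    using Suc.IH by linarith
  have "(\<Sum>j<Suc a. ?u j * t ^ (Suc a - Suc j)) + ?u (Suc a)
      = t * (real (Suc a) * t ^ a - ?u a) + ?u a + ?u (Suc a)"
    by (simp only: sum.lessThan_Suc diff_Suc_Suc diff_self_eq_0 power_0 mult_1_right shift IH)
  also have "\<dots> = real (Suc (Suc a)) * t ^ Suc a"
    by (simp add: algebra_simps)
  finally show ?case .
qed simp

text \<open>The recursion obtained by choosing the block of a fixed element.\<close>
lemma c_partition_total_Suc:
  "(\<Sum>j\<le>a. real (a choose j) * c_coef (Suc j) t * c_partition_total t (a - j)) = c_partition_total t (Suc a)"
proof -
  have "(\<Sum>j\<le>a. real (a choose j) * c_coef (Suc j) t * c_partition_total t (a - j))
      = (\<Sum>j\<le>a. fact a * ((t ^ Suc j - (t - 1) ^ Suc j) * t ^ (a - Suc j)))"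
  proof (intro sum.cong refl)
    fix j assume "j \<in> {..a}"
    hence fact_a: "real (fact j) * real (fact (a - j)) * real (a choose j) = fact a"
      using binomial_fact_lemma[of j a] by (metis atMost_iff of_nat_fact of_nat_mult)
    have "a - j - 1 = a - Suc j" by simp
    hence "real (a choose j) * c_coef (Suc j) t * c_partition_total t (a - j)
        = (real (fact j) * real (fact (a - j)) * real (a choose j))
          * ((t ^ Suc j - (t - 1) ^ Suc j) * t ^ (a - Suc j))"
      by (simp add: c_coef_def c_partition_total_def)
    thus "real (a choose j) * c_coef (Suc j) t * c_partition_total t (a - j)
        = fact a * ((t ^ Suc j - (t - 1) ^ Suc j) * t ^ (a - Suc j))"
      by (simp only: fact_a)
  qed
  also have "\<dots> = fact a * ((\<Sum>j<a. (t ^ Suc j - (t - 1) ^ Suc j) * t ^ (a - Suc j))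
                              + (t ^ Suc a - (t - 1) ^ Suc a))"
    by (simp only: sum_distrib_left[symmetric] lessThan_Suc_atMost[symmetric] sum.lessThan_Suc) simp
  also have "\<dots> = fact a * (real (Suc a) * t ^ a)"
    by (simp only: sum_pow_diff_mult_pow)
  also have "\<dots> = c_partition_total t (Suc a)" by (simp add: c_partition_total_def)
  finally show ?thesis .
qed

lemma sum_subsets_c_partition_total:
  assumes "finite F"
  shows "(\<Sum>S\<in>{S. S \<subseteq> F}. c_coef (Suc (card S)) t * c_partition_total t (card F - card S))
       = c_partition_total t (Suc (card F))"
proof -
  have "(\<Sum>S\<in>{S. S \<subseteq> F}. c_coef (Suc (card S)) t * c_partition_total t (card F - card S))
      = (\<Sum>j\<le>card F. real (card F choose j) * (c_coef (Suc j) t * c_partition_total t (card F - j)))"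
    by (rule sum_subsets_by_card[OF assms])
  also have "\<dots> = c_partition_total t (Suc (card F))"
    unfolding c_partition_total_Suc[symmetric] by (simp only: mult.assoc)
  finally show ?thesis .
qed

lemma prod_fibers_remove:
  assumes "finite V" "c \<in> V" "\<And>i. g i \<noteq> c \<Longrightarrow> i \<in> A \<longleftrightarrow> i \<in> B"
  shows "(\<Prod>v\<in>V. f {i\<in>A. g i = v}) = f {i\<in>A. g i = c} * (\<Prod>v\<in>V - {c}. f {i\<in>B. g i = v})"
proof -
  have "(\<Prod>v\<in>V - {c}. f {i\<in>A. g i = v}) = (\<Prod>v\<in>V - {c}. f {i\<in>B. g i = v})"
    using assms(3) by (intro prod.cong refl arg_cong[where f=f]) auto
  thus ?thesis using prod.remove[OF assms(1,2), of "\<lambda>v. f {i\<in>A. g i = v}"] by simp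
qed

lemma fiber_partition_sum_eq_prod:
  assumes "finite J" "finite V" "g ` J \<subseteq> V"
  shows "fiber_partition_sum t g J = (\<Prod>v\<in>V. c_partition_total t (card {i\<in>J. g i = v}))"
  using assms
proof (induction "card J" arbitrary: J rule: less_induct)
  case less
  show ?case
  proof (cases "J = {}")
    case True
    thus ?thesis by (simp add: fiber_partition_sum_empty c_partition_total_def)
  next
    case False
    then obtain x J' where J: "J = insert x J'" "x \<notin> J'" by (meson Set.set_insert ex_in_conv)
    define F where "F = {i\<in>J'. g i = g x}"
    define rest where "rest = (\<Prod>v\<in>V - {g x}. c_partition_total t (card {i\<in>J'. g i = v}))"
    have fin: "finite J'" "finite F" using less.prems(1) J by (auto simp: F_def)
    have gx: "g x \<in> V" using less.prems(3) J by auto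
    have IH: "fiber_partition_sum t g (J' - S) = c_partition_total t (card F - card S) * rest"
      if "S \<subseteq> F" for S
    proof -
      have "card (J' - S) \<le> card J'" using fin(1) by (intro card_mono) auto
      also have "\<dots> < card J" using fin(1) J by simp
      finally have "fiber_partition_sum t g (J' - S)
          = (\<Prod>v\<in>V. c_partition_total t (card {i\<in>J' - S. g i = v}))"
        using fin(1) less.prems J by (intro less.hyps) auto
      also have "\<dots> = c_partition_total t (card {i\<in>J' - S. g i = g x}) * rest"
        unfolding rest_def using less.prems(2) gx
        by (rule prod_fibers_remove[where f="\<lambda>X. c_partition_total t (card X)"])
          (use that in \<open>auto simp: F_def\<close>)
      also have "{i\<in>J' - S. g i = g x} = F - S" by (auto simp: F_def)
      finally show ?thesis
        using that fin(2) by (simp add: card_Diff_subset finite_subset)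
    qed
    have "fiber_partition_sum t g J
        = (\<Sum>S\<in>{S. S \<subseteq> F}. c_coef (Suc (card S)) t * fiber_partition_sum t g (J' - S))"
      unfolding J(1) fiber_partition_sum_insert[OF fin(1) J(2)] F_def
      by (intro sum.cong) auto
    also have "\<dots> = (\<Sum>S\<in>{S. S \<subseteq> F}. c_coef (Suc (card S)) t * c_partition_total t (card F - card S)) * rest"
      unfolding sum_distrib_right using IH by (intro sum.cong refl) (simp add: mult.assoc)
    also have "\<dots> = c_partition_total t (Suc (card F)) * rest"
      by (simp only: sum_subsets_c_partition_total[OF fin(2)])
    also have "Suc (card F) = card {i\<in>J. g i = g x}"
    proof -
      have "{i\<in>J. g i = g x} = insert x F" using J by (auto simp: F_def)
      thus ?thesis using fin(2) J(2) by (simp add: F_def)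
    qed
    also have "c_partition_total t (card {i\<in>J. g i = g x}) * rest
             = (\<Prod>v\<in>V. c_partition_total t (card {i\<in>J. g i = v}))"
      unfolding rest_def using less.prems(2) gx
      by (rule prod_fibers_remove[where f="\<lambda>X. c_partition_total t (card X)", symmetric])
        (auto simp: J)
    finally show ?thesis .
  qed
qed

lemma count_mset_eq_card: "count (mset xs) v = card {i\<in>{..<length xs}. xs ! i = v}"
proof -
  have "count (mset xs) v = length (filter (\<lambda>x. v = x) xs)"
    by (simp add: count_mset count_list_eq_length_filter)
  also have "\<dots> = card {i. i < length xs \<and> v = xs ! i}"
    by (rule length_filter_conv_card)
  also have "{i. i < length xs \<and> v = xs ! i} = {i\<in>{..<length xs}. xs ! i = v}"
    by auto
  finally show ?thesis .
qed

lemma fiber_partition_sum_nth: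
  "fiber_partition_sum t (nth xs) {..<length xs}
   = t ^ (length xs - card (set xs)) * (\<Prod>v\<in>set xs. fact (count (mset xs) v))"
proof -
  have sum_count: "(\<Sum>v\<in>set xs. count (mset xs) v - 1) = length xs - card (set xs)"
  proof -
    have "(\<Sum>v\<in>set xs. count (mset xs) v - 1) + card (set xs) = (\<Sum>v\<in>set xs. count (mset xs) v - 1 + 1)"
      by (simp only: sum.distrib) simp
    also have "\<dots> = (\<Sum>v\<in>set xs. count (mset xs) v)"
      by (intro sum.cong refl) simp
    also have "\<dots> = length xs"
      using size_multiset_overloaded_eq[of "mset xs"] by simp
    finally show ?thesis by simp
  qed
  have "fiber_partition_sum t (nth xs) {..<length xs}
      = (\<Prod>v\<in>set xs. c_partition_total t (count (mset xs) v))"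
    by (subst fiber_partition_sum_eq_prod[where V="set xs"]) (auto simp: count_mset_eq_card)
  also have "\<dots> = t ^ (\<Sum>v\<in>set xs. count (mset xs) v - 1) * (\<Prod>v\<in>set xs. fact (count (mset xs) v))"
    by (simp add: c_partition_total_def prod.distrib power_sum)
  finally show ?thesis by (simp only: sum_count)
qed

lemma sum_permutes_zeta_t_trunc_eq_partitions:
  "(\<Sum>\<sigma>\<in>{\<sigma>. \<sigma> permutes {..<length ks}}. zeta_t_trunc t h (permute_list \<sigma> ks))
   = (\<Sum>P\<in>{P. partition_on {..<length ks} P}.
        (\<Prod>B\<in>P. c_coef (card B) t) * (\<Prod>B\<in>P. mzv_trunc h [\<Sum>l\<in>B. ks ! l]))"
proof -
  let ?Ps = "{P. partition_on {..<length ks} P}"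
  let ?c = "\<lambda>P. \<Prod>B\<in>P. c_coef (card B) t"
  have fin_Ps: "finite ?Ps" by (rule finitely_many_partition_on) simp
  have coeff: "(\<Sum>P\<in>?Ps. if const_on_blocks (nth ms) P then ?c P * mzv_summand ks ms else 0)
             = zeta_t_summand t ks ms * (\<Prod>m\<in>set ms. fact (count (mset ms) m))"
    if "ms \<in> index_lists h (length ks)" for ms
  proof -
    have len: "length ms = length ks" using that by (simp add: index_lists_def)
    have "(\<Sum>P\<in>?Ps. if const_on_blocks (nth ms) P then ?c P * mzv_summand ks ms else 0)
        = (\<Sum>P\<in>{P. partition_on {..<length ms} P \<and> const_on_blocks (nth ms) P}. ?c P * mzv_summand ks ms)"
      unfolding len by (subst sum.inter_filter[OF fin_Ps, symmetric]) simp
    also have "\<dots> = mzv_summand ks ms * fiber_partition_sum t (nth ms) {..<length ms}"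
      by (simp add: fiber_partition_sum_def sum_distrib_left mult.commute)
    also have "\<dots> = mzv_summand ks ms * (t ^ (length ms - card (set ms)) * (\<Prod>m\<in>set ms. fact (count (mset ms) m)))"
      by (simp only: fiber_partition_sum_nth)
    finally show ?thesis by (simp add: zeta_t_summand_def len ac_simps)
  qed
  have "(\<Sum>P\<in>?Ps. ?c P * (\<Prod>B\<in>P. mzv_trunc h [\<Sum>l\<in>B. ks ! l]))
      = (\<Sum>P\<in>?Ps. \<Sum>ms\<in>index_lists h (length ks).
           if const_on_blocks (nth ms) P then ?c P * mzv_summand ks ms else 0)"
  proof (intro sum.cong refl)
    fix P assume "P \<in> ?Ps"
    thus "?c P * (\<Prod>B\<in>P. mzv_trunc h [\<Sum>l\<in>B. ks ! l])
        = (\<Sum>ms\<in>index_lists h (length ks). if const_on_blocks (nth ms) P then ?c P * mzv_summand ks ms else 0)"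
      by (simp add: prod_mzv_trunc_blocks sum_distrib_left if_distrib cong: if_cong)
  qed
  also have "\<dots> = (\<Sum>ms\<in>index_lists h (length ks). \<Sum>P\<in>?Ps.
                   if const_on_blocks (nth ms) P then ?c P * mzv_summand ks ms else 0)"
    by (rule sum.swap)
  also have "\<dots> = (\<Sum>ms\<in>index_lists h (length ks).
                   zeta_t_summand t ks ms * (\<Prod>m\<in>set ms. fact (count (mset ms) m)))"
    by (rule sum.cong[OF refl coeff])
  finally show ?thesis by (simp only: sum_permutes_zeta_t_trunc)
qed

lemma block_sum_nth_ge:
  fixes ks :: "nat list"
  assumes P: "partition_on {..<length ks} P" and B: "B \<in> P" and "\<forall>k\<in>set ks. c \<le> k"
  shows "c \<le> (\<Sum>l\<in>B. ks ! l)"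
proof -
  obtain l where l: "l \<in> B" using partition_onD3[OF P] B by (metis ex_in_conv)
  have B_sub: "B \<subseteq> {..<length ks}" using partition_onD1[OF P] B by auto
  hence "ks ! l \<le> (\<Sum>l\<in>B. ks ! l)" using l finite_subset by (intro member_le_sum) auto
  moreover have "c \<le> ks ! l" using assms(3) l B_sub by auto
  ultimately show ?thesis by linarith
qed

theorem theorem3p2:
  fixes ks :: "nat list" and t :: real
  assumes "\<forall>k\<in>set ks. k \<ge> 2"
  shows "(\<Sum>\<sigma>\<in>{\<sigma>. \<sigma> permutes {0..<length ks}}.
            zeta_t t (map (\<lambda>i. ks ! \<sigma> i) [0..<length ks]))
       = (\<Sum>P\<in>{P. partition_on {0..<length ks} P}.
            (\<Prod>B\<in>P. c_coef (card B) t) * (\<Prod>B\<in>P. mzv [\<Sum>l\<in>B. ks ! l]))"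
proof -
  have perm: "map (\<lambda>i. ks ! \<sigma> i) [0..<length ks] = permute_list \<sigma> ks" for \<sigma>
    by (simp add: permute_list_def)
  have "(\<lambda>h. \<Sum>\<sigma>\<in>{\<sigma>. \<sigma> permutes {..<length ks}}. zeta_t_trunc t h (permute_list \<sigma> ks))
        \<longlonglongrightarrow> (\<Sum>\<sigma>\<in>{\<sigma>. \<sigma> permutes {..<length ks}}. zeta_t t (permute_list \<sigma> ks))"
    using assms by (intro tendsto_sum tendsto_zeta_t_trunc) simp
  moreover have "(\<lambda>h. \<Sum>P\<in>{P. partition_on {..<length ks} P}.
                        (\<Prod>B\<in>P. c_coef (card B) t) * (\<Prod>B\<in>P. mzv_trunc h [\<Sum>l\<in>B. ks ! l]))
        \<longlonglongrightarrow> (\<Sum>P\<in>{P. partition_on {..<length ks} P}.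
                        (\<Prod>B\<in>P. c_coef (card B) t) * (\<Prod>B\<in>P. mzv [\<Sum>l\<in>B. ks ! l]))"
    using block_sum_nth_ge[OF _ _ assms]
    by (intro tendsto_sum tendsto_mult_left tendsto_prod tendsto_mzv_trunc) simp
  ultimately show ?thesis
    unfolding atLeast0LessThan perm sum_permutes_zeta_t_trunc_eq_partitions by (rule LIMSEQ_unique)
qed

end
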